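(* For all integers $n,k,p$ with $n\ge 9$, $3\le k\le n/3$ and $p\ge\max\{k-1,\lceil n/(k-1)\rceil\}$, there exists a feasible homogeneous PV graph $\vec G_R$ with $n$ sites, $k$ carriers and period $p$ such that $$\mathcal M(\vec G_R)\ \ge\ (k-2)(p+1)+\left\lfloor \frac{n}{k-1}\right\rfloor .$$ (This holds even though the agent knows $\vec G_R$, $k$, $p$ and has unlimited memory.)
   Context: A PV (periodically varying) system consists of a finite set $S$ of $n$ sites and a set $C$ of $k\le n$ carriers. Each carrier $c$ has a route $\pi(c)=\langle x_0,\dots,x_{p(c)-1}\rangle$, a finite sequence of sites (repetitions allowed) of length $p(c)\ge1$ called its period; $\pi(c)[j]=x_{j\bmod p(c)}$. At each time $t\in\mathbb N$ carrier $c$ is at $\pi(c)[t]$ and moves to $\pi(c)[t+1]$. The PV graph $\vec G_R$ is the directed edge-labelled multigraph on $S$ with edges $(x_i,x_{i+1},i)$, $0\le i<p(c)$, for every carrier. The period of the system is $p=\max_c p(c)$; the system is homogeneous if all $p(c)$ are equal, heterogeneous otherwise. An exploring agent is injected at time $0$ at a site of $\mathrm{start}(\vec G_R)=\{\pi(c)[0]:c\in C\}$; if at time $t$ it is at site $x$ it must either ride one step with some carrier $c$ with $\pi(c)[t]=x$ (one move, to $\pi(c)[t+1]$) or halt; it cannot wait. A walk is a concrete cover if it visits every site. A strategy solves PVG-Exploration of $\vec G_R$ if from every injection site the agent visits all sites and halts in finite time. $\vec G_R$ is feasible if from the starting point of every carrier some realizable walk is a concrete cover. For feasible $\vec G_R$,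 $\mathcal M(\vec G_R)$ denotes the minimum, over all deterministic strategies solving PVG-Exploration of $\vec G_R$ (which may use full knowledge of $\vec G_R$ and unlimited memory), of the maximum over injection sites of the number of moves performed. *)

theory Defs
  imports Main "HOL-Library.Discrete_Functions" Complex_Main
begin

definition pv_wf :: "nat set \<Rightarrow> nat \<Rightarrow> (nat \<Rightarrow> nat list) \<Rightarrow> bool" where
  "pv_wf S k R \<longleftrightarrow> finite S \<and> (\<forall>c<k. R c \<noteq> [] \<and> set (R c) \<subseteq> S)"

definition pv_pos :: "(nat \<Rightarrow> nat list) \<Rightarrow> nat \<Rightarrow> nat \<Rightarrow> nat" where
  "pv_pos R c t = R c ! (t mod length (R c))"

definition pv_period :: "nat \<Rightarrow> (nat \<Rightarrow> nat list) \<Rightarrow> nat" where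
  "pv_period k R = Max ((\<lambda>c. length (R c)) ` {..<k})"

definition pv_homogeneous :: "nat \<Rightarrow> (nat \<Rightarrow> nat list) \<Rightarrow> bool" where
  "pv_homogeneous k R \<longleftrightarrow> (\<forall>c<k. \<forall>d<k. length (R c) = length (R d))"

definition pv_start :: "nat \<Rightarrow> (nat \<Rightarrow> nat list) \<Rightarrow> nat set" where
  "pv_start k R = {pv_pos R c 0 | c. c < k}"

text \<open>Sites visited by the agent injected at x0 at time 0 that rides carrier cs!j
  at time j (j-th move); the j-th entry is the site at time j.\<close>
definition walk_sites :: "(nat \<Rightarrow> nat list) \<Rightarrow> nat \<Rightarrow> nat list \<Rightarrow> nat list" where
  "walk_sites R x0 cs = x0 # map (\<lambda>j. pv_pos R (cs ! j) (Suc j)) [0..<length cs]"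

definition realizable_walk :: "nat \<Rightarrow> (nat \<Rightarrow> nat list) \<Rightarrow> nat \<Rightarrow> nat list \<Rightarrow> bool" where
  "realizable_walk k R x0 cs \<longleftrightarrow>
     (\<forall>j<length cs. cs ! j < k \<and> pv_pos R (cs ! j) j = walk_sites R x0 cs ! j)"

definition concrete_cover :: "nat set \<Rightarrow> (nat \<Rightarrow> nat list) \<Rightarrow> nat \<Rightarrow> nat list \<Rightarrow> bool" where
  "concrete_cover S R x0 cs \<longleftrightarrow> S \<subseteq> set (walk_sites R x0 cs)"

definition pv_feasible :: "nat set \<Rightarrow> nat \<Rightarrow> (nat \<Rightarrow> nat list) \<Rightarrow> bool" where
  "pv_feasible S k R \<longleftrightarrow>
     (\<forall>c<k. \<exists>cs. realizable_walk k R (pv_pos R c 0) cs \<and> concrete_cover S R (pv_pos R c 0) cs)"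

text \<open>A deterministic strategy maps the history of visited sites (injection site first,
  current site last; the current time is its length minus one) to Some c (ride carrier c)
  or None (halt). It may depend arbitrarily on the fixed PV graph (it is chosen after it).\<close>
definition strategy_run ::
  "nat \<Rightarrow> (nat \<Rightarrow> nat list) \<Rightarrow> (nat list \<Rightarrow> nat option) \<Rightarrow> nat \<Rightarrow> nat list \<Rightarrow> bool" where
  "strategy_run k R \<sigma> x0 cs \<longleftrightarrow>
     realizable_walk k R x0 cs \<and>
     (\<forall>j<length cs. \<sigma> (take (Suc j) (walk_sites R x0 cs)) = Some (cs ! j)) \<and>
     \<sigma> (walk_sites R x0 cs) = None"

definition solves_exploration ::
  "nat set \<Rightarrow> nat \<Rightarrow> (nat \<Rightarrow> nat list) \<Rightarrow> (nat list \<Rightarrow> nat option) \<Rightarrow> bool" where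
  "solves_exploration S k R \<sigma> \<longleftrightarrow>
     (\<forall>x0 \<in> pv_start k R. \<exists>cs. strategy_run k R \<sigma> x0 cs \<and> concrete_cover S R x0 cs)"

definition pv_M :: "nat set \<Rightarrow> nat \<Rightarrow> (nat \<Rightarrow> nat list) \<Rightarrow> nat" where
  "pv_M S k R = (LEAST m. \<exists>\<sigma>. solves_exploration S k R \<sigma> \<and>
      (\<forall>x0 \<in> pv_start k R. \<forall>cs. strategy_run k R \<sigma> x0 cs \<longrightarrow> length cs \<le> m))"

end

theory Submission
  imports Defs
begin

text \<open>
  Given \<open>n, k, p\<close> we build a
  hub-and-blocks system: the \<open>n\<close> sites are split into a hub and \<open>k - 1\<close> private blocks;
  carrier \<open>0\<close> circulates on the hub, carrier \<open>c \<ge> 1\<close> tours its own block and touches the hub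
  once per period, at times \<open>t \<equiv> c (mod p)\<close>.  The first site of block \<open>c\<close> (its key site)
  is reached only at the end of the tour, so each key site costs an agent essentially \<open>p + 1\<close>
  moves; an agent injected on carrier \<open>1\<close> thus needs \<open>(k - 2)(p + 1) + p\<close> moves, which is at
  least the claimed bound since \<open>n div (k - 1) \<le> p\<close>.
\<close>

section \<open>Walks and strategies\<close>

lemma walk_sites_length [simp]: "length (walk_sites R x0 cs) = Suc (length cs)"
  by (simp add: walk_sites_def)

lemma walk_sites_nth_0 [simp]: "walk_sites R x0 cs ! 0 = x0"
  by (simp add: walk_sites_def)

lemma walk_sites_nth_Suc:
  "j < length cs \<Longrightarrow> walk_sites R x0 cs ! Suc j = pv_pos R (cs ! j) (Suc j)"
  by (simp add: walk_sites_def)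

lemma walk_sites_nth_Suc_mem:
  "j < length cs \<Longrightarrow> pv_pos R (cs ! j) (Suc j) \<in> set (walk_sites R x0 cs)"
  by (metis walk_sites_nth_Suc walk_sites_length nth_mem Suc_mono)

lemma hd_take_walk_sites: "hd (take (Suc j) (walk_sites R x0 cs)) = x0"
  by (simp add: walk_sites_def)

lemma realizable_walk_of_schedule:
  assumes carriers: "\<And>t. t < L \<Longrightarrow> f t < k"
    and start: "0 < L \<Longrightarrow> pv_pos R (f 0) 0 = x0"
    and meet: "\<And>t. Suc t < L \<Longrightarrow> pv_pos R (f (Suc t)) (Suc t) = pv_pos R (f t) (Suc t)"
  shows "realizable_walk k R x0 (map f [0..<L])"
  unfolding realizable_walk_def
proof (intro allI impI conjI)
  fix j assume j: "j < length (map f [0..<L])"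
  then show "map f [0..<L] ! j < k" using carriers by simp
  show "pv_pos R (map f [0..<L] ! j) j = walk_sites R x0 (map f [0..<L]) ! j"
  proof (cases j)
    case 0
    then show ?thesis using j start by simp
  next
    case (Suc i)
    then show ?thesis using j meet[of i] by (simp add: walk_sites_nth_Suc)
  qed
qed

lemma pv_start_eq: "pv_start k R = (\<lambda>c. pv_pos R c 0) ` {..<k}"
  by (auto simp: pv_start_def)

text \<open>Replaying fixed covering walks: if every injection site has a realizable covering walk,
  the strategy that follows the chosen walk for the site recorded at the head of the history
  solves PVG-Exploration, and its number of moves is bounded (there are finitely many
  injection sites).  Hence the minimum defining \<open>pv_M\<close> is taken over a nonempty set.\<close>

lemma replay_strategy:
  assumes walks: "\<forall>x0\<in>pv_start k R. \<exists>cs. realizable_walk k R x0 cs \<and> concrete_cover S R x0 cs"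
  shows "\<exists>M \<sigma>. solves_exploration S k R \<sigma> \<and>
      (\<forall>x0 \<in> pv_start k R. \<forall>cs. strategy_run k R \<sigma> x0 cs \<longrightarrow> length cs \<le> M)"
proof -
  define W where "W x0 = (SOME cs. realizable_walk k R x0 cs \<and> concrete_cover S R x0 cs)" for x0
  have W: "realizable_walk k R x0 (W x0) \<and> concrete_cover S R x0 (W x0)"
    if "x0 \<in> pv_start k R" for x0
    unfolding W_def using walks that by (metis (mono_tags, lifting) someI_ex)
  define \<sigma> where "\<sigma> h = (if h \<noteq> [] \<and> length h \<le> length (W (hd h)) \<and>
       h = take (length h) (walk_sites R (hd h) (W (hd h)))
     then Some (W (hd h) ! (length h - 1)) else None)" for h
  define M where "M = Max ((\<lambda>x. length (W x)) ` pv_start k R)"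
  have run: "strategy_run k R \<sigma> x0 (W x0)" if "x0 \<in> pv_start k R" for x0
  proof -
    have "\<sigma> (take (Suc j) (walk_sites R x0 (W x0))) = Some (W x0 ! j)" if "j < length (W x0)" for j
    proof -
      have "length (take (Suc j) (walk_sites R x0 (W x0))) = Suc j" using that by simp
      then show ?thesis unfolding \<sigma>_def hd_take_walk_sites using that
        by (auto simp: walk_sites_def)
    qed
    moreover have "\<sigma> (walk_sites R x0 (W x0)) = None"
      unfolding \<sigma>_def by (simp add: walk_sites_def)
    ultimately show ?thesis using W[OF that] unfolding strategy_run_def by auto
  qed
  have bounded: "length cs \<le> M" if "x0 \<in> pv_start k R" "strategy_run k R \<sigma> x0 cs" for x0 cs
  proof (cases "cs = []")
    case False
    define j where "j = length cs - 1"
    have j: "j < length cs" "Suc j = length cs" using False j_def by auto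
    have "\<sigma> (take (Suc j) (walk_sites R x0 cs)) = Some (cs ! j)"
      using that(2) j unfolding strategy_run_def by blast
    then have "length (take (Suc j) (walk_sites R x0 cs)) \<le> length (W x0)"
      unfolding \<sigma>_def hd_take_walk_sites by (auto split: if_splits)
    then have "length cs \<le> length (W x0)" using j by simp
    also have "\<dots> \<le> M" unfolding M_def using that(1) by (simp add: pv_start_eq)
    finally show ?thesis .
  qed simp
  have "solves_exploration S k R \<sigma>"
    unfolding solves_exploration_def using run W by blast
  then show ?thesis using bounded by blast
qed

text \<open>The lower-bound principle: for a feasible system, if every realizable covering walk
  from some injection site needs at least \<open>L\<close> moves, then \<open>pv_M \<ge> L\<close>, because an optimal
  strategy performs such a walk from that site.\<close>

lemma pv_M_lower_bound:
  assumes feasible: "pv_feasible S k R" and x0: "x0 \<in> pv_start k R"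
    and long: "\<And>cs. realizable_walk k R x0 cs \<Longrightarrow> concrete_cover S R x0 cs \<Longrightarrow> L \<le> length cs"
  shows "L \<le> pv_M S k R"
proof -
  define good where "good M \<longleftrightarrow> (\<exists>\<sigma>. solves_exploration S k R \<sigma> \<and>
      (\<forall>x0 \<in> pv_start k R. \<forall>cs. strategy_run k R \<sigma> x0 cs \<longrightarrow> length cs \<le> M))" for M
  have "\<forall>x0\<in>pv_start k R. \<exists>cs. realizable_walk k R x0 cs \<and> concrete_cover S R x0 cs"
    using feasible unfolding pv_feasible_def pv_start_def by auto
  then have "\<exists>M. good M" using replay_strategy unfolding good_def by blast
  then have "good (Least good)" by (rule LeastI_ex)
  moreover have "pv_M S k R = Least good" unfolding pv_M_def good_def by simp
  ultimately obtain \<sigma> where solves: "solves_exploration S k R \<sigma>"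
    and moves: "\<forall>x0 \<in> pv_start k R. \<forall>cs. strategy_run k R \<sigma> x0 cs \<longrightarrow> length cs \<le> pv_M S k R"
    unfolding good_def by auto
  obtain cs where run: "strategy_run k R \<sigma> x0 cs" and cover: "concrete_cover S R x0 cs"
    using solves x0 unfolding solves_exploration_def by blast
  have "L \<le> length cs" using long run cover unfolding strategy_run_def by blast
  also have "\<dots> \<le> pv_M S k R" using moves x0 run by blast
  finally show ?thesis .
qed


section \<open>The hub-and-blocks system\<close>

lemma exists_bounded_summands:
  fixes lo hi :: "nat \<Rightarrow> nat"
  assumes "\<forall>i<K. lo i \<le> hi i" "(\<Sum>i<K. lo i) \<le> N" "N \<le> (\<Sum>i<K. hi i)"
  shows "\<exists>f. (\<forall>i<K. lo i \<le> f i \<and> f i \<le> hi i) \<and> (\<Sum>i<K. f i) = N"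
  using assms
proof (induction K arbitrary: N)
  case (Suc K)
  define x where "x = min (hi K) (N - (\<Sum>i<K. lo i))"
  have x: "lo K \<le> x" "x \<le> hi K" "x \<le> N" using Suc.prems by (auto simp: x_def)
  have "(\<Sum>i<K. lo i) \<le> (\<Sum>i<K. hi i)"
    using Suc.prems(1) by (intro sum_mono) auto
  then have "(\<Sum>i<K. lo i) \<le> N - x" "N - x \<le> (\<Sum>i<K. hi i)"
    using Suc.prems by (auto simp: x_def min_def)
  then obtain f where f: "\<forall>i<K. lo i \<le> f i \<and> f i \<le> hi i" "(\<Sum>i<K. f i) = N - x"
    using Suc.IH Suc.prems(1) by (meson less_SucI)
  have "\<forall>i<Suc K. lo i \<le> (f(K := x)) i \<and> (f(K := x)) i \<le> hi i"
    using f x by (auto simp: less_Suc_eq)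
  moreover have "(\<Sum>i<Suc K. (f(K := x)) i) = N"
    using f x by (simp add: lessThan_Suc)
  ultimately show ?case by blast
qed simp

text \<open>Sites are \<open>0, \<dots>, n - 1\<close>, cut into consecutive blocks:
  block \<open>0\<close> (size \<open>m 0\<close>) is the hub, block \<open>c\<close> (size \<open>m c\<close>, \<open>1 \<le> c < k\<close>) is private to
  carrier \<open>c\<close>.  Carrier \<open>0\<close> walks through the hub forever.  Carrier \<open>c \<ge> 1\<close> is on the hub
  exactly at the times \<open>t \<equiv> c (mod p)\<close>, where it meets carrier \<open>0\<close>, and otherwise tours its
  private block.  The first site of block \<open>c\<close> (its \<^emph>\<open>key site\<close>) is visited only at phase
  \<open>key_phase c\<close>, i.e. just before carrier \<open>c\<close> returns to the hub (one step earlier for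
  \<open>c = 1\<close>), so collecting a key site costs essentially a whole period.\<close>

locale hub_system =
  fixes p k :: nat and m :: "nat \<Rightarrow> nat"
  assumes p_ge_3: "3 \<le> p" and k_ge_3: "3 \<le> k" and k_le_p: "k - 1 \<le> p"
    and hub_size: "1 \<le> m 0" "m 0 \<le> p"
    and block_size: "\<And>c. 1 \<le> c \<Longrightarrow> c < k \<Longrightarrow> 2 \<le> m c \<and> m c \<le> p - 1"
begin

definition block_start :: "nat \<Rightarrow> nat" where
  "block_start c = (\<Sum>i<c. m i)"

text \<open>The phase of carrier \<open>c\<close> at time \<open>t\<close>: the time elapsed since its last hub time.\<close>
definition phase :: "nat \<Rightarrow> nat \<Rightarrow> nat" where
  "phase c t = (t + (p - c mod p)) mod p"

definition key_phase :: "nat \<Rightarrow> nat" where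
  "key_phase c = (if c = 1 then p - 2 else p - 1)"

text \<open>Offset within block \<open>c\<close> of the site visited at phase \<open>q \<ge> 1\<close>: the key site (offset \<open>0\<close>)
  at the key phase, the other sites of the block in increasing order before it.\<close>
definition block_index :: "nat \<Rightarrow> nat \<Rightarrow> nat" where
  "block_index c q = (if q = key_phase c then 0
     else if c = 1 \<and> q = p - 1 then min (p - 2) (m c - 1) else min q (m c - 1))"

definition at_hub :: "nat \<Rightarrow> nat \<Rightarrow> bool" where
  "at_hub c t \<longleftrightarrow> c = 0 \<or> phase c t = 0"

text \<open>The position of carrier \<open>c\<close> at time \<open>t\<close>; on the hub, all carriers present occupy the
  same hub site.  The route lists one period of positions.\<close>
definition site :: "nat \<Rightarrow> nat \<Rightarrow> nat" where
  "site c t = (if at_hub c t then min (t mod p) (m 0 - 1)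
     else block_start c + block_index c (phase c t))"

definition route :: "nat \<Rightarrow> nat list" where
  "route c = map (site c) [0..<p]"

lemma p_pos: "0 < p"
  using p_ge_3 by simp

lemma phase_lt: "phase c t < p"
  unfolding phase_def using p_pos by simp

lemma phase_mod: "phase c (t mod p) = phase c t"
  unfolding phase_def by (simp add: mod_add_left_eq)

lemma site_mod: "site c (t mod p) = site c t"
  unfolding site_def at_hub_def phase_mod by simp

lemma pv_pos_route: "pv_pos route c t = site c t"
  unfolding pv_pos_def route_def using p_pos by (simp add: site_mod)

lemma phase_eq_0_iff: "phase c t = 0 \<longleftrightarrow> t mod p = c mod p"
proof -
  have t: "t mod p < p" and c: "c mod p < p" using p_pos by simp_all
  have "phase c t = (t mod p + (p - c mod p)) mod p"
    unfolding phase_def by (simp add: mod_add_left_eq)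
  also have "\<dots> = (if c mod p \<le> t mod p then t mod p - c mod p else t mod p + (p - c mod p))"
  proof (cases "c mod p \<le> t mod p")
    case True
    have "(t mod p + (p - c mod p)) mod p = ((t mod p - c mod p) + p) mod p"
      by (rule arg_cong[where f = "\<lambda>x. x mod p"]) (use True c in simp)
    also have "\<dots> = t mod p - c mod p" using t by simp
    finally show ?thesis using True by (simp only: if_P)
  next
    case False
    then show ?thesis using c by simp
  qed
  finally show ?thesis using c by auto
qed

lemma phase_Suc: "phase c (Suc t) = (if phase c t = p - 1 then 0 else Suc (phase c t))"
proof -
  have "phase c (Suc t) = Suc (phase c t) mod p"
    unfolding phase_def by (simp add: mod_Suc_eq)
  moreover have "Suc (phase c t) \<le> p" using phase_lt[of c t] by simp
  ultimately show ?thesis using p_pos by (auto simp: le_less)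
qed

lemma key_phase_bounds: "1 \<le> key_phase c" "key_phase c < p"
  using p_ge_3 unfolding key_phase_def by auto

lemma block_start_mono: "c < c' \<Longrightarrow> block_start c + m c \<le> block_start c'"
proof (induction c')
  case (Suc c')
  then show ?case unfolding block_start_def by (auto simp: less_Suc_eq)
qed simp

lemma block_start_le: "c \<le> c' \<Longrightarrow> block_start c \<le> block_start c'"
  using block_start_mono[of c c'] by (cases "c = c'") auto

lemma hub_below_block_start: "1 \<le> c \<Longrightarrow> m 0 \<le> block_start c"
  using block_start_le[of 1 c] by (simp add: block_start_def)

lemma block_index_lt: "1 \<le> c \<Longrightarrow> c < k \<Longrightarrow> block_index c q < m c"
  using block_size[of c] unfolding block_index_def by auto

lemma block_index_eq_0_iff:
  "1 \<le> c \<Longrightarrow> c < k \<Longrightarrow> 1 \<le> q \<Longrightarrow> block_index c q = 0 \<longleftrightarrow> q = key_phase c"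
  using block_size[of c] p_ge_3 unfolding block_index_def key_phase_def by auto

lemma block_index_surj:
  assumes "1 \<le> c" "c < k" "z < m c"
  shows "\<exists>q. 1 \<le> q \<and> q < p \<and> block_index c q = z"
proof -
  have size: "2 \<le> m c" "m c \<le> p - 1" using block_size assms by auto
  consider "z = 0" | "z \<noteq> 0" "c \<noteq> 1 \<or> z \<le> p - 3" | "z = p - 2" "c = 1"
    using size assms by linarith
  then show ?thesis
  proof cases
    case 1
    then show ?thesis using p_ge_3
      by (intro exI[of _ "key_phase c"]) (auto simp: block_index_def key_phase_def)
  next
    case 2
    then show ?thesis using size assms p_ge_3
      by (intro exI[of _ z]) (auto simp: block_index_def key_phase_def)
  next
    case 3
    then show ?thesis using size assms p_ge_3
      by (intro exI[of _ "p - 1"]) (auto simp: block_index_def key_phase_def)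
  qed
qed

lemma site_at_hub: "at_hub c t \<Longrightarrow> site c t = min (t mod p) (m 0 - 1) \<and> site c t < m 0"
  unfolding site_def using hub_size by auto

lemma site_in_block:
  assumes "c < k" "\<not> at_hub c t"
  shows "site c t = block_start c + block_index c (phase c t) \<and>
    block_start c \<le> site c t \<and> site c t < block_start c + m c \<and> m 0 \<le> site c t"
proof -
  have "1 \<le> c" using assms(2) by (simp add: at_hub_def)
  then show ?thesis
    using assms block_index_lt[of c] hub_below_block_start[of c] unfolding site_def by auto
qed

lemma site_lt_n: "c < k \<Longrightarrow> site c t < block_start k"
  using site_at_hub[of c t] site_in_block[of c t] hub_below_block_start[of k] k_ge_3
    block_start_mono[of c k] by (cases "at_hub c t") auto

lemma block_unique:
  assumes "c < k" "c' < k" "block_start c \<le> x" "x < block_start c + m c"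
    "block_start c' \<le> x" "x < block_start c' + m c'"
  shows "c = c'"
  using block_start_mono[of c c'] block_start_mono[of c' c] assms by (cases c c' rule: linorder_cases) auto

lemma private_site_owner:
  assumes "c < k" "c' < k" "site c t = site c' t" "m 0 \<le> site c t"
  shows "c = c' \<and> \<not> at_hub c t"
proof -
  have "\<not> at_hub c t" "\<not> at_hub c' t" using assms site_at_hub[of c t] site_at_hub[of c' t] by auto
  then show ?thesis using block_unique[of c c' "site c t"] site_in_block[of c t] site_in_block[of c' t] assms
    by auto
qed

lemma hub_time_unique:
  assumes "1 \<le> c" "c < k" "1 \<le> c'" "c' < k" "phase c t = 0" "phase c' t = 0"
  shows "c = c'"
proof -
  have "c mod p = c' mod p" using assms phase_eq_0_iff by simp
  moreover have "c \<le> p" "c' \<le> p" using assms k_le_p by auto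
  ultimately show ?thesis using assms(1,3)
    by (metis le_neq_implies_less mod_less mod_self not_one_le_zero)
qed

subsection \<open>Feasibility: a covering walk from every start\<close>

text \<open>From any start the agent first rides its own carrier \<open>c0\<close> up to the hub, then stays on
  carrier \<open>0\<close>, except that during the window \<open>[visit_start c, visit_start c + p)\<close> it rides
  carrier \<open>c\<close> for one full tour of block \<open>c\<close>; both ends of a window are hub times of \<open>c\<close>.\<close>

definition visit_start :: "nat \<Rightarrow> nat" where
  "visit_start c = p + 2 * p * c + c mod p"

definition schedule :: "nat \<Rightarrow> nat \<Rightarrow> nat" where
  "schedule c0 t = (if t < c0 mod p then c0
     else let c = (t - p) div (2 * p) in
       if 1 \<le> c \<and> visit_start c \<le> t \<and> t < visit_start c + p then c else 0)"

definition schedule_length :: nat where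
  "schedule_length = p + 2 * p * k"

definition schedule_walk :: "nat \<Rightarrow> nat list" where
  "schedule_walk c0 = map (schedule c0) [0..<schedule_length]"

lemma visit_start_mod: "visit_start c mod p = c mod p" "(visit_start c + p) mod p = c mod p"
proof -
  have "visit_start c = c mod p + (1 + 2 * c) * p" "visit_start c + p = c mod p + (2 + 2 * c) * p"
    unfolding visit_start_def by (simp_all add: algebra_simps)
  then show "visit_start c mod p = c mod p" "(visit_start c + p) mod p = c mod p"
    by (simp_all only: mod_mult_self1 mod_mod_trivial)
qed

lemma visit_window_div:
  assumes "visit_start c \<le> t" "t < visit_start c + p"
  shows "(t - p) div (2 * p) = c"
proof -
  have "t - p = (t - visit_start c + c mod p) + c * (2 * p)"
    using assms(1) unfolding visit_start_def by (simp add: algebra_simps)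
  moreover have "t - visit_start c + c mod p < 2 * p"
    using assms mod_less_divisor[OF p_pos, of c] by arith
  ultimately show ?thesis using p_pos by simp
qed

lemma phase_visit_start: "q < p \<Longrightarrow> phase c (visit_start c + q) = q"
proof -
  assume q: "q < p"
  have "c mod p \<le> p" using p_pos by simp
  then have "visit_start c + q + (p - c mod p) = q + (2 + 2 * c) * p"
    unfolding visit_start_def by (simp add: algebra_simps)
  then have "phase c (visit_start c + q) = (q + (2 + 2 * c) * p) mod p"
    unfolding phase_def by (simp only:)
  also have "\<dots> = q mod p" by (simp only: mod_mult_self1)
  finally show ?thesis using q by simp
qed

lemma schedule_eq_iff:
  assumes "1 \<le> c"
  shows "schedule c0 t = c \<longleftrightarrow>
    (c = c0 \<and> t < c mod p) \<or> (visit_start c \<le> t \<and> t < visit_start c + p)"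
proof (cases "t < c0 mod p")
  case True
  then have "t < p" using p_pos by (meson mod_less_divisor order.strict_trans)
  then have "\<not> visit_start c \<le> t" unfolding visit_start_def by linarith
  then show ?thesis using True unfolding schedule_def by auto
next
  case False
  then show ?thesis
    using assms visit_window_div[of c t] unfolding schedule_def Let_def by auto
qed

text \<open>The schedule only switches carriers at hub times of both carriers involved, so
  consecutive carriers of the walk always meet.\<close>
lemma schedule_leaves_at_hub:
  assumes "schedule c0 t = c" "schedule c0 (Suc t) \<noteq> c"
  shows "at_hub c (Suc t)"
proof (cases "c = 0")
  case False
  then have c: "1 \<le> c" by simp
  have "Suc t = c mod p \<or> Suc t = visit_start c + p"
    using schedule_eq_iff[OF c, of c0 t] schedule_eq_iff[OF c, of c0 "Suc t"] assms by auto
  then have "Suc t mod p = c mod p" using visit_start_mod by auto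
  then show ?thesis by (simp add: at_hub_def phase_eq_0_iff)
qed (simp add: at_hub_def)

lemma schedule_enters_at_hub:
  assumes "schedule c0 (Suc t) = c" "schedule c0 t \<noteq> c"
  shows "at_hub c (Suc t)"
proof (cases "c = 0")
  case False
  then have c: "1 \<le> c" by simp
  have "Suc t = visit_start c"
    using schedule_eq_iff[OF c, of c0 t] schedule_eq_iff[OF c, of c0 "Suc t"] assms by auto
  then have "Suc t mod p = c mod p" using visit_start_mod by auto
  then show ?thesis by (simp add: at_hub_def phase_eq_0_iff)
qed (simp add: at_hub_def)

lemma schedule_meet: "site (schedule c0 (Suc t)) (Suc t) = site (schedule c0 t) (Suc t)"
proof (cases "schedule c0 (Suc t) = schedule c0 t")
  case False
  then show ?thesis
    using schedule_leaves_at_hub[OF refl, of c0 t] schedule_enters_at_hub[OF refl, of c0 t]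
      site_at_hub by metis
qed simp

lemma schedule_lt_k:
  assumes "c0 < k" "t < schedule_length"
  shows "schedule c0 t < k"
proof -
  have "(t - p) div (2 * p) < k" if "p \<le> t"
  proof -
    have "t - p < k * (2 * p)" using assms(2) that unfolding schedule_length_def
      by (simp add: algebra_simps)
    then show ?thesis by (rule less_mult_imp_div_less)
  qed
  then show ?thesis unfolding schedule_def Let_def visit_start_def using assms(1) by auto
qed

lemma schedule_walk_realizable:
  assumes "c0 < k"
  shows "realizable_walk k route (pv_pos route c0 0) (schedule_walk c0)"
  unfolding schedule_walk_def
proof (rule realizable_walk_of_schedule)
  show "schedule c0 t < k" if "t < schedule_length" for t
    using schedule_lt_k[OF assms that] .
  show "pv_pos route (schedule c0 0) 0 = pv_pos route c0 0"
  proof (cases "0 < c0 mod p")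
    case False
    then have "schedule c0 0 = 0" "at_hub c0 0"
      using p_pos by (auto simp: schedule_def at_hub_def phase_eq_0_iff)
    then show ?thesis by (simp add: pv_pos_route site_def at_hub_def)
  qed (simp add: schedule_def)
  show "pv_pos route (schedule c0 (Suc t)) (Suc t) = pv_pos route (schedule c0 t) (Suc t)" for t
    using schedule_meet by (simp add: pv_pos_route)
qed

lemma site_in_some_block:
  "x < block_start K \<Longrightarrow> x < m 0 \<or> (\<exists>c. 1 \<le> c \<and> c < K \<and> block_start c \<le> x \<and> x < block_start c + m c)"
proof (induction K)
  case (Suc K)
  show ?case
  proof (cases "x < block_start K")
    case True
    then show ?thesis using Suc.IH by (metis less_SucI)
  next
    case False
    then have "x < block_start K + m K" using Suc.prems by (simp add: block_start_def)
    then show ?thesis using False by (cases "K = 0") (auto simp: block_start_def)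
  qed
qed (simp add: block_start_def)

text \<open>Hub sites are reached on carrier \<open>0\<close> between times \<open>2p\<close> and \<open>3p\<close>; the sites of
  block \<open>c\<close> during the window of \<open>c\<close>.\<close>
lemma schedule_visits_hub:
  assumes "x < m 0"
  shows "\<exists>t < schedule_length. site (schedule c0 t) (Suc t) = x"
proof -
  define t where "t = 2 * p + x - 1"
  have x: "x < p" using assms hub_size by linarith
  have "c0 mod p < p" using p_pos by simp
  then have "\<not> t < c0 mod p" "p \<le> t" using x p_pos unfolding t_def by linarith+
  moreover have "(t - p) div (2 * p) = 0" using x p_pos unfolding t_def by simp
  ultimately have "schedule c0 t = 0" unfolding schedule_def by simp
  moreover have "Suc t mod p = x" using x p_pos unfolding t_def by simp
  moreover have "t < schedule_length"
  proof -
    have "2 * p * 3 \<le> 2 * p * k" using k_ge_3 by simp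
    then show ?thesis using x unfolding t_def schedule_length_def by linarith
  qed
  ultimately show ?thesis using assms by (intro exI[of _ t]) (simp add: site_def at_hub_def)
qed

lemma schedule_visits_block:
  assumes c: "1 \<le> c" "c < k" and x: "block_start c \<le> x" "x < block_start c + m c"
  shows "\<exists>t < schedule_length. site (schedule c0 t) (Suc t) = x"
proof -
  have "x - block_start c < m c" using x by linarith
  then obtain q where q: "1 \<le> q" "q < p" "block_index c q = x - block_start c"
    using block_index_surj[OF c] by blast
  define t where "t = visit_start c + q - 1"
  have t: "Suc t = visit_start c + q" using q unfolding t_def by simp
  have "schedule c0 t = c" using schedule_eq_iff[OF c(1), of c0 t] q unfolding t_def by auto
  moreover have "site c (Suc t) = x"
    using phase_visit_start[OF q(2), of c] q x c unfolding t site_def at_hub_def by simp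
  moreover have "t < schedule_length"
  proof -
    have "c mod p < p" using p_pos by simp
    then have "Suc t < p + 2 * p * c + 2 * p" using t q unfolding visit_start_def by linarith
    also have "\<dots> = p + 2 * p * (c + 1)" by simp
    also have "\<dots> \<le> schedule_length"
      using c mult_le_mono2[of "c + 1" k "2 * p"] unfolding schedule_length_def by simp
    finally show ?thesis by simp
  qed
  ultimately show ?thesis by blast
qed

lemma schedule_walk_covers:
  "concrete_cover {..<block_start k} route x0 (schedule_walk c0)"
  unfolding concrete_cover_def
proof
  fix x assume "x \<in> {..<block_start k}"
  then consider "x < m 0"
    | c where "1 \<le> c" "c < k" "block_start c \<le> x" "x < block_start c + m c"
    using site_in_some_block[of x k] by auto
  then obtain t where t: "t < schedule_length" "site (schedule c0 t) (Suc t) = x"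
    by cases (use schedule_visits_hub schedule_visits_block in blast)+
  then show "x \<in> set (walk_sites route x0 (schedule_walk c0))"
    using walk_sites_nth_Suc_mem[of t "schedule_walk c0" route x0]
    by (simp add: schedule_walk_def pv_pos_route)
qed

subsection \<open>The lower bound: collecting the key sites\<close>

lemma site_eq_key_iff:
  assumes "c' < k" "1 \<le> c" "c < k"
  shows "site c' t = block_start c \<longleftrightarrow> c' = c \<and> phase c t = key_phase c"
proof
  assume key: "site c' t = block_start c"
  then have "m 0 \<le> site c' t" using hub_below_block_start[OF assms(2)] by simp
  then have c': "\<not> at_hub c' t" using site_at_hub[of c' t] by auto
  then have "c' = c"
    using block_unique[OF assms(1,3), of "site c' t"] site_in_block[OF assms(1) c'] key
      block_size[OF assms(2,3)] by simp
  moreover have "block_index c (phase c t) = 0"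
    using key site_in_block[of c t] c' calculation assms by simp
  ultimately show "c' = c \<and> phase c t = key_phase c"
    using block_index_eq_0_iff[OF assms(2,3)] c' by (simp add: at_hub_def)
next
  assume "c' = c \<and> phase c t = key_phase c"
  then show "site c' t = block_start c"
    using key_phase_bounds[of c] assms(2) by (simp add: site_def at_hub_def block_index_def)
qed

lemma new_keys:
  assumes "c' < k"
  shows "{c. 1 \<le> c \<and> c < k \<and> site c' t = block_start c} =
    (if 1 \<le> c' \<and> phase c' t = key_phase c' then {c'} else {})"
  using site_eq_key_iff[OF assms] assms by auto

text \<open>The invariant of an exploring agent currently on carrier \<open>l\<close> at time \<open>j\<close>, having visited
  the key sites of the carriers in \<open>D\<close>: the time spent is at least \<open>card D * (p + 1)\<close> plus a
  correction depending on where the agent is.  On the hub, the correction is \<open>hub_slack\<close>;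
  on a block whose key is still missing, it is \<open>outbound_slack\<close> plus the current phase; on a
  block whose key was collected, the agent still owes the way back to the hub.  The slacks
  (at most \<open>2\<close>) absorb boundary effects: the start on carrier \<open>1\<close>, whose key phase is one
  step earlier, and the carriers meeting the hub right after a return.\<close>

definition hub_slack :: "nat \<Rightarrow> nat set \<Rightarrow> nat" where
  "hub_slack j D = (if 1 \<in> D then (if \<exists>c\<in>D. phase c j = 0 then 0 else 1)
     else (if (\<exists>c\<in>D. phase c j = 0) \<or> (card D = 0 \<and> phase 1 j = 0) then 1 else 2))"

definition outbound_slack :: "nat \<Rightarrow> nat set \<Rightarrow> nat" where
  "outbound_slack c D = (if 1 \<in> D then 1 else if c = 1 \<and> card D = 0 then 1 else 2)"

definition return_slack :: "nat \<Rightarrow> nat set \<Rightarrow> nat" where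
  "return_slack c D = (if c = 1 then (if 2 \<le> card D then 2 else 1) else (if 1 \<in> D then 1 else 2))"

definition explore_inv :: "nat \<Rightarrow> nat \<Rightarrow> nat set \<Rightarrow> bool" where
  "explore_inv l j D \<longleftrightarrow> (if at_hub l j then card D * (p + 1) + hub_slack j D \<le> j
     else (l \<notin> D \<longrightarrow> card D * (p + 1) + outbound_slack l D + phase l j \<le> j) \<and>
          (l \<in> D \<longrightarrow> card D * (p + 1) + return_slack l D + max (phase l j) (key_phase l) \<le> j + p + 1))"

text \<open>Leaving the hub on a carrier whose key is missing costs at most the hub slack: no other
  carrier of \<open>D\<close> is on the hub at the same time.\<close>
lemma outbound_slack_le_hub_slack:
  assumes "D \<subseteq> {1..<k}" "1 \<le> c'" "c' < k" "c' \<notin> D" "phase c' j = 0"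
  shows "outbound_slack c' D \<le> hub_slack j D"
proof -
  have none: "\<not> (\<exists>c\<in>D. phase c j = 0)"
    using hub_time_unique[OF _ _ assms(2,3) _ assms(5)] assms(1,4) by fastforce
  have "c' = 1" if "phase 1 j = 0" using hub_time_unique[of 1 c' j] assms that k_ge_3 by auto
  then show ?thesis using none assms(4) by (auto simp: hub_slack_def outbound_slack_def)
qed

lemma explore_inv_outbound:
  assumes DS: "D \<subseteq> {1..<k}" and c': "1 \<le> c'" "c' < k" "c' \<notin> D"
    and moving: "phase c' (Suc j) \<noteq> 0"
    and time: "card D * (p + 1) + outbound_slack c' D + phase c' (Suc j) \<le> Suc j"
    and D': "D' = D \<union> {c. 1 \<le> c \<and> c < k \<and> site c' (Suc j) = block_start c}"
  shows "explore_inv c' (Suc j) D'"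
proof -
  have fin: "finite D" using DS finite_subset by blast
  have off_hub: "\<not> at_hub c' (Suc j)" using c' moving by (simp add: at_hub_def)
  show ?thesis
  proof (cases "phase c' (Suc j) = key_phase c'")
    case True
    then have D'_eq: "D' = insert c' D" using D' new_keys[OF c'(2), of "Suc j"] c' by auto
    have "return_slack c' D' \<le> outbound_slack c' D"
      using fin c'(3) unfolding D'_eq return_slack_def outbound_slack_def by auto
    then show ?thesis using off_hub fin c'(3) D'_eq True time unfolding explore_inv_def by simp
  next
    case False
    then have "D' = D" using D' new_keys[OF c'(2), of "Suc j"] by auto
    then show ?thesis using off_hub c'(3) time unfolding explore_inv_def by simp
  qed
qed

lemma explore_inv_step_from_hub:
  assumes DS: "D \<subseteq> {1..<k}" and c': "c' < k" and hub: "at_hub l j"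
    and meet: "site c' j = site l j" and inv: "explore_inv l j D"
    and D': "D' = D \<union> {c. 1 \<le> c \<and> c < k \<and> site c' (Suc j) = block_start c}"
  shows "explore_inv c' (Suc j) D'"
proof -
  have time: "card D * (p + 1) + hub_slack j D \<le> j" using inv hub unfolding explore_inv_def by simp
  have "site c' j < m 0" using meet site_at_hub[OF hub] by simp
  then have hub': "at_hub c' j" using site_in_block[OF c'] by fastforce
  show ?thesis
  proof (cases "c' = 0")
    case True
    have "hub_slack (Suc j) D \<le> Suc (hub_slack j D)" unfolding hub_slack_def by auto
    moreover have "D' = D" using D' new_keys[OF c', of "Suc j"] True by auto
    ultimately show ?thesis using time True unfolding explore_inv_def by (simp add: at_hub_def)
  next
    case False
    then have c1: "1 \<le> c'" and leave: "phase c' j = 0" using hub' by (auto simp: at_hub_def)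
    have phase1: "phase c' (Suc j) = 1" using leave phase_Suc[of c' j] p_ge_3 by simp
    show ?thesis
    proof (cases "c' \<in> D")
      case True
      have "D' = D" using D' new_keys[OF c', of "Suc j"] True by auto
      moreover have "return_slack c' D \<le> 2" unfolding return_slack_def by auto
      ultimately show ?thesis
        using True time phase1 key_phase_bounds[of c'] c1
        unfolding explore_inv_def by (simp add: at_hub_def)
    next
      case False
      have "outbound_slack c' D \<le> hub_slack j D"
        using outbound_slack_le_hub_slack[OF DS c1 c' False leave] .
      then show ?thesis using explore_inv_outbound[OF DS c1 c' False _ _ D'] time phase1 by simp
    qed
  qed
qed

text \<open>At the end of a tour of its block, carrier \<open>l\<close> brings the agent back to the hub; the
  tour has paid for the key site collected on it (if any).\<close>
lemma explore_inv_return_to_hub: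
  assumes block: "\<not> at_hub l j" and last: "phase l j = p - 1" and inv: "explore_inv l j D"
  shows "card D * (p + 1) + hub_slack (Suc j) D \<le> Suc j"
proof (cases "l \<in> D")
  case False
  then have "card D * (p + 1) + outbound_slack l D + (p - 1) \<le> j"
    using inv block last unfolding explore_inv_def by simp
  moreover have "1 \<le> outbound_slack l D" "hub_slack (Suc j) D \<le> 2"
    unfolding outbound_slack_def hub_slack_def by auto
  ultimately show ?thesis using p_ge_3 by linarith
next
  case True
  have "max (phase l j) (key_phase l) = p - 1" using last key_phase_bounds[of l] by simp
  then have "card D * (p + 1) + return_slack l D + (p - 1) \<le> j + p + 1"
    using inv block True unfolding explore_inv_def by simp
  moreover have "phase l (Suc j) = 0" using last phase_Suc[of l j] by simp
  then have "hub_slack (Suc j) D + 1 \<le> return_slack l D"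
    using True unfolding hub_slack_def return_slack_def by auto
  ultimately show ?thesis using p_ge_3 by linarith
qed

text \<open>Inside a private block the agent can only stay on the block's owner.\<close>
lemma explore_inv_step_in_block:
  assumes DS: "D \<subseteq> {1..<k}" and l: "l < k" and c': "c' < k" and block: "\<not> at_hub l j"
    and meet: "site c' j = site l j" and inv: "explore_inv l j D"
    and D': "D' = D \<union> {c. 1 \<le> c \<and> c < k \<and> site c' (Suc j) = block_start c}"
  shows "explore_inv c' (Suc j) D'"
proof -
  have l1: "1 \<le> l" using block by (simp add: at_hub_def)
  have "m 0 \<le> site c' j" using meet site_in_block[OF l block] by simp
  then have "c' = l" using private_site_owner[OF c' l, of j] meet by simp
  show ?thesis
  proof (cases "phase l j = p - 1")
    case True
    then have "D' = D" and "at_hub c' (Suc j)"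
      using D' new_keys[OF c', of "Suc j"] key_phase_bounds[of c'] \<open>c' = l\<close> phase_Suc[of l j]
      by (auto simp: at_hub_def)
    then show ?thesis
      using explore_inv_return_to_hub[OF block True inv] unfolding explore_inv_def by simp
  next
    case False
    then have advance: "phase l (Suc j) = Suc (phase l j)" using phase_Suc[of l j] by simp
    show ?thesis
    proof (cases "l \<in> D")
      case False
      then have "card D * (p + 1) + outbound_slack l D + phase l (Suc j) \<le> Suc j"
        using inv block advance unfolding explore_inv_def by simp
      then show ?thesis
        using explore_inv_outbound[OF DS l1 l False _ _] D' advance \<open>c' = l\<close> by simp
    next
      case True
      have "D' = D" using D' new_keys[OF c', of "Suc j"] True \<open>c' = l\<close> by auto
      moreover have "\<not> at_hub l (Suc j)" using advance l1 by (simp add: at_hub_def)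
      moreover have "card D * (p + 1) + return_slack l D + max (phase l j) (key_phase l)
          \<le> j + p + 1"
        using inv block True unfolding explore_inv_def by simp
      ultimately show ?thesis using True advance \<open>c' = l\<close> unfolding explore_inv_def by auto
    qed
  qed
qed

lemma explore_inv_step:
  assumes "D \<subseteq> {1..<k}" "l < k" "c' < k" "site c' j = site l j" "explore_inv l j D"
    "D' = D \<union> {c. 1 \<le> c \<and> c < k \<and> site c' (Suc j) = block_start c}"
  shows "explore_inv c' (Suc j) D'"
  using explore_inv_step_from_hub[of D c' l j] explore_inv_step_in_block[of D l c' j] assms
  by (cases "at_hub l j") auto

definition keys_seen :: "nat list \<Rightarrow> nat \<Rightarrow> nat set" where
  "keys_seen cs j =
    {c. 1 \<le> c \<and> c < k \<and> (\<exists>i\<le>j. walk_sites route (site 1 0) cs ! i = block_start c)}"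

lemma phase_carrier_1: "phase 1 0 = p - 1" "phase 1 1 = 0"
  using p_ge_3 by (simp_all add: phase_def phase_eq_0_iff)

lemma keys_seen_Suc:
  "j < length cs \<Longrightarrow> keys_seen cs (Suc j) =
    keys_seen cs j \<union> {c. 1 \<le> c \<and> c < k \<and> site (cs ! j) (Suc j) = block_start c}"
  unfolding keys_seen_def by (auto simp: le_Suc_eq walk_sites_nth_Suc pv_pos_route)

text \<open>Carrier \<open>1\<close> starts inside its own block, so the agent must ride it first; it brings
  the agent to the hub without passing the key site.\<close>
lemma walk_starts_on_carrier_1:
  assumes "realizable_walk k route (site 1 0) cs" "cs \<noteq> []"
  shows "cs ! 0 = 1" "keys_seen cs 1 = {}"
proof -
  have "cs ! 0 < k" "site (cs ! 0) 0 = site 1 0"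
    using assms unfolding realizable_walk_def by (auto simp: pv_pos_route)
  moreover have "m 0 \<le> site 1 0"
    using site_in_block[of 1 0] k_ge_3 phase_carrier_1 p_ge_3 by (simp add: at_hub_def)
  ultimately show first: "cs ! 0 = 1" using private_site_owner[of "cs ! 0" 1 0] k_ge_3 by simp
  have "site 1 0 \<noteq> block_start c" if "1 \<le> c" "c < k" for c
    using site_eq_key_iff[of 1 c 0] that k_ge_3 phase_carrier_1 p_ge_3 by (auto simp: key_phase_def)
  moreover have "site 1 1 \<noteq> block_start c" if "1 \<le> c" for c
    using site_at_hub[of 1 1] phase_carrier_1 hub_below_block_start[OF that]
    by (auto simp: at_hub_def)
  moreover have "walk_sites route (site 1 0) cs ! i \<in> {site 1 0, site 1 1}" if "i \<le> 1" for i
    using that assms(2) first walk_sites_nth_Suc[of 0 cs route "site 1 0"]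
    by (cases i) (auto simp: pv_pos_route)
  ultimately show "keys_seen cs 1 = {}"
    unfolding keys_seen_def by fastforce
qed

lemma explore_inv_along_walk:
  assumes walk: "realizable_walk k route (site 1 0) cs" and "1 \<le> j" "j \<le> length cs"
  shows "explore_inv (cs ! (j - 1)) j (keys_seen cs j)"
  using assms(2,3)
proof (induction j rule: dec_induct)
  case base
  then have "cs \<noteq> []" by auto
  then show ?case using walk_starts_on_carrier_1[OF walk] phase_carrier_1
    by (simp add: explore_inv_def at_hub_def hub_slack_def)
next
  case (step j)
  then have j: "j < length cs" by simp
  have legal: "cs ! j < k" "site (cs ! j) j = walk_sites route (site 1 0) cs ! j"
    using walk j unfolding realizable_walk_def by (auto simp: pv_pos_route)
  have "walk_sites route (site 1 0) cs ! j = site (cs ! (j - 1)) j"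
    using walk_sites_nth_Suc[of "j - 1" cs] step by (simp add: pv_pos_route)
  moreover have "cs ! (j - 1) < k" using walk step unfolding realizable_walk_def by simp
  moreover have "keys_seen cs j \<subseteq> {1..<k}" unfolding keys_seen_def by auto
  ultimately show ?case
    using explore_inv_step[OF _ _ legal(1) _ step.IH keys_seen_Suc[OF j]] legal j by simp
qed

lemma covering_walk_sees_all_keys:
  assumes "concrete_cover {..<block_start k} route (site 1 0) cs"
  shows "keys_seen cs (length cs) = {1..<k}"
proof
  show "keys_seen cs (length cs) \<subseteq> {1..<k}" unfolding keys_seen_def by auto
  show "{1..<k} \<subseteq> keys_seen cs (length cs)"
  proof
    fix c assume c: "c \<in> {1..<k}"
    then have "block_start c < block_start k"
      using block_start_mono[of c k] block_size[of c] by auto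
    then have "block_start c \<in> set (walk_sites route (site 1 0) cs)"
      using assms unfolding concrete_cover_def by auto
    then show "c \<in> keys_seen cs (length cs)"
      using c unfolding keys_seen_def by (auto simp: in_set_conv_nth less_Suc_eq_le)
  qed
qed

lemma explore_inv_all_keys:
  assumes "l < k" "explore_inv l L {1..<k}"
  shows "(k - 2) * (p + 1) + p \<le> L"
proof -
  have "card {1..<k} = Suc (k - 2)" using k_ge_3 by simp
  then have card: "card {1..<k} * (p + 1) = (k - 2) * (p + 1) + (p + 1)" by simp
  show ?thesis
  proof (cases "at_hub l L")
    case True
    then show ?thesis using assms card unfolding explore_inv_def by simp
  next
    case False
    then have "1 \<le> l" by (simp add: at_hub_def)
    then have "p \<le> return_slack l {1..<k} + max (phase l L) (key_phase l)"
      using k_ge_3 p_ge_3 by (auto simp: return_slack_def key_phase_def)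
    moreover have "card {1..<k} * (p + 1) + return_slack l {1..<k} + max (phase l L) (key_phase l)
        \<le> L + p + 1"
      using assms False \<open>1 \<le> l\<close> unfolding explore_inv_def by (simp del: card_atLeastLessThan)
    ultimately show ?thesis using card by linarith
  qed
qed

lemma covering_walk_length:
  assumes walk: "realizable_walk k route (site 1 0) cs"
    and cover: "concrete_cover {..<block_start k} route (site 1 0) cs"
  shows "(k - 2) * (p + 1) + p \<le> length cs"
proof -
  have "cs \<noteq> []"
  proof
    assume "cs = []"
    then have "{..<block_start k} \<subseteq> {site 1 0}"
      using cover unfolding concrete_cover_def by (simp add: walk_sites_def)
    moreover have "2 \<le> block_start k"
      using block_start_mono[of 1 k] block_size[of 1] hub_size k_ge_3 by (simp add: block_start_def)
    ultimately have "(0::nat) \<in> {site 1 0}" "(1::nat) \<in> {site 1 0}" by (auto simp: subset_eq)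
    then show False by simp
  qed
  then have "explore_inv (cs ! (length cs - 1)) (length cs) {1..<k}"
    using explore_inv_along_walk[OF walk, of "length cs"] covering_walk_sees_all_keys[OF cover]
    by (simp add: Suc_le_eq)
  moreover have "cs ! (length cs - 1) < k"
    using walk \<open>cs \<noteq> []\<close> unfolding realizable_walk_def by simp
  ultimately show ?thesis using explore_inv_all_keys by blast
qed

lemma hub_system_lower_bound:
  "pv_wf {..<block_start k} k route \<and> pv_homogeneous k route \<and> pv_period k route = p \<and>
   pv_feasible {..<block_start k} k route \<and>
   (k - 2) * (p + 1) + p \<le> pv_M {..<block_start k} k route"
proof (intro conjI)
  show "pv_wf {..<block_start k} k route"
    unfolding pv_wf_def using p_pos site_lt_n by (auto simp: route_def)
  show "pv_homogeneous k route" by (simp add: pv_homogeneous_def route_def)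
  have "0 \<in> {..<k}" using k_ge_3 by simp
  then have "(\<lambda>c. length (route c)) ` {..<k} = {p}" by (auto simp: route_def image_iff)
  then show "pv_period k route = p" by (simp add: pv_period_def)
  show feasible: "pv_feasible {..<block_start k} k route"
    unfolding pv_feasible_def
    using schedule_walk_realizable schedule_walk_covers by blast
  have start: "site 1 0 \<in> pv_start k route"
    using k_ge_3 by (auto simp: pv_start_def pv_pos_route intro!: exI[of _ 1])
  show "(k - 2) * (p + 1) + p \<le> pv_M {..<block_start k} k route"
    using pv_M_lower_bound[OF feasible start] covering_walk_length by blast
qed

end

section \<open>The theorem\<close>

lemma parameter_bounds:
  fixes n k p :: nat
  assumes "3 \<le> k" "3 * k \<le> n" "real p \<ge> of_int \<lceil>real n / real (k - 1)\<rceil>"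
  shows "n \<le> p * (k - 1)" "3 \<le> p" "n div (k - 1) \<le> p"
proof -
  have "real n / real (k - 1) \<le> real p"
    using assms(3) le_of_int_ceiling order_trans by blast
  then have "real n \<le> real p * real (k - 1)" using assms(1) by (simp add: divide_le_eq)
  then show n: "n \<le> p * (k - 1)" by (metis of_nat_le_iff of_nat_mult)
  show "3 \<le> p"
  proof (rule ccontr)
    assume "\<not> 3 \<le> p"
    then have "p * (k - 1) \<le> 2 * (k - 1)" by simp
    then show False using n assms(1,2) by linarith
  qed
  have "n div (k - 1) \<le> (p * (k - 1)) div (k - 1)" using n by (rule div_le_mono)
  then show "n div (k - 1) \<le> p" using assms(1) by simp
qed

lemma hub_system_exists:
  assumes p: "3 \<le> p" and k: "3 \<le> k" "k - 1 \<le> p" and n: "3 * k \<le> n" "n \<le> p * (k - 1)"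
  obtains m where "hub_system p k m" "(\<Sum>i<k. m i) = n"
proof -
  define lo where "lo i = (if i = 0 then 1 else (2::nat))" for i :: nat
  define hi where "hi i = (if i = 0 then p else p - 1)" for i :: nat
  have sum_split: "(\<Sum>i<Suc K. if i = 0 then a else b) = a + K * b" for K a b :: nat
    by (induction K) auto
  obtain K where K: "k = Suc K" using k by (cases k) auto
  have sums: "(\<Sum>i<k. lo i) = 1 + K * 2" "(\<Sum>i<k. hi i) = p + K * (p - 1)"
    unfolding lo_def hi_def K by (rule sum_split)+
  have "p * K \<le> p + K * (p - 1)"
    using k(2) p unfolding K by (simp add: algebra_simps diff_mult_distrib2)
  then have "(\<Sum>i<k. lo i) \<le> n" "n \<le> (\<Sum>i<k. hi i)"
    using sums n unfolding K by simp_all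
  moreover have "\<forall>i<k. lo i \<le> hi i" using p unfolding lo_def hi_def by auto
  ultimately obtain m where m: "\<forall>i<k. lo i \<le> m i \<and> m i \<le> hi i" "(\<Sum>i<k. m i) = n"
    using exists_bounded_summands by blast
  have "hub_system p k m"
  proof
    have "0 < k" using k by simp
    then show "1 \<le> m 0" "m 0 \<le> p" using m(1) unfolding lo_def hi_def by auto
    show "2 \<le> m c \<and> m c \<le> p - 1" if "1 \<le> c" "c < k" for c
      using m(1) that unfolding lo_def hi_def by auto
  qed (use p k in auto)
  then show ?thesis using m(2) that by blast
qed

theorem mainTheorem3:
  fixes n k p :: nat
  assumes "n \<ge> 9" and "3 \<le> k" and "3 * k \<le> n"
    and "p \<ge> k - 1" and "real p \<ge> of_int \<lceil>real n / real (k - 1)\<rceil>"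
  shows "\<exists>(S :: nat set) (R :: nat \<Rightarrow> nat list).
           pv_wf S k R \<and> card S = n \<and> pv_homogeneous k R \<and> pv_period k R = p \<and>
           pv_feasible S k R \<and>
           pv_M S k R \<ge> (k - 2) * (p + 1) + n div (k - 1)"
proof -
  note bounds = parameter_bounds[OF assms(2,3,5)]
  obtain m where sys: "hub_system p k m" and sizes: "(\<Sum>i<k. m i) = n"
    using hub_system_exists[OF bounds(2) assms(2,4,3) bounds(1)] .
  interpret hub_system p k m by (fact sys)
  have "block_start k = n" using sizes by (simp add: block_start_def)
  then have system: "pv_wf {..<n} k route" "pv_homogeneous k route" "pv_period k route = p"
      "pv_feasible {..<n} k route" and moves: "(k - 2) * (p + 1) + p \<le> pv_M {..<n} k route"
    using hub_system_lower_bound by simp_all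
  have "(k - 2) * (p + 1) + n div (k - 1) \<le> pv_M {..<n} k route"
    using moves bounds(3) by linarith
  then show ?thesis using system by (intro exI[of _ "{..<n}"] exI[of _ route]) simp
qed

end
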